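(* Let $d\ge2$, let $\Omega\subset\mathbb{R}^d$ be compact, let $X_1,X_2,\ldots$ be i.i.d. in $\Omega$ with density $\varphi_P$, and $Y_1,Y_2,\ldots$ i.i.d. in $\Omega$ with density $\varphi_D$, all independent. Let $L^*(n)$ be the length of the optimal stacker crane tour through the pairs $(X_i,Y_i)$, $i=1,\ldots,n$. Then $$\liminf_{n\to\infty}\frac{L^*(n)}{n}\ge \mathbb{E}_{\varphi_P\varphi_D}\|Y-X\|+W(\varphi_D,\varphi_P)\quad\text{almost surely},$$ where $X$ and $Y$ are independent with densities $\varphi_P$ and $\varphi_D$ respectively.
   Context: Given pickup/delivery pairs $(x_i,y_i)$, a stacker crane tour is a closed tour through all $x_i,y_i$ in which each pickup $x_i$ is immediately followed by its delivery $y_i$; its length is the sum of Euclidean distances along the tour. The Euclidean Wasserstein distance is $W(\varphi_1,\varphi_2)=\inf_{\gamma\in\Gamma(\varphi_1,\varphi_2)}\int_{\Omega\times\Omega}\|y-x\|\,d\gamma(x,y)$, with $\Gamma(\varphi_1,\varphi_2)$ the set of measures on $\Omega\times\Omega$ with marginal densities $\varphi_1,\varphi_2$. The densities are densities of absolutely continuous distributions. *)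

theory Defs
  imports "HOL-Probability.Probability" "HOL-Combinatorics.Permutations"
begin

definition sc_tour_length ::
  "(nat \<Rightarrow> 'a::euclidean_space) \<Rightarrow> (nat \<Rightarrow> 'a) \<Rightarrow> nat \<Rightarrow> (nat \<Rightarrow> nat) \<Rightarrow> real" where
  "sc_tour_length x y n \<sigma> =
     (\<Sum>k<n. dist (x (\<sigma> k)) (y (\<sigma> k)) + dist (y (\<sigma> k)) (x (\<sigma> ((k + 1) mod n))))"

definition sc_opt :: "(nat \<Rightarrow> 'a::euclidean_space) \<Rightarrow> (nat \<Rightarrow> 'a) \<Rightarrow> nat \<Rightarrow> real" where
  "sc_opt x y n = Min (sc_tour_length x y n ` {\<sigma>. \<sigma> permutes {..<n}})"

definition couplings :: "'a::euclidean_space set \<Rightarrow> 'a measure \<Rightarrow> 'a measure \<Rightarrow> ('a \<times> 'a) measure set" where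
  "couplings \<Omega> \<mu> \<nu> = {\<gamma>. sets \<gamma> = sets (borel \<Otimes>\<^sub>M borel) \<and>
       emeasure \<gamma> (UNIV - \<Omega> \<times> \<Omega>) = 0 \<and>
       distr \<gamma> borel fst = \<mu> \<and> distr \<gamma> borel snd = \<nu>}"

definition wasserstein :: "'a::euclidean_space set \<Rightarrow> ('a \<Rightarrow> real) \<Rightarrow> ('a \<Rightarrow> real) \<Rightarrow> real" where
  "wasserstein \<Omega> \<phi>1 \<phi>2 =
     (INF \<gamma> \<in> couplings \<Omega> (density lborel (\<lambda>x. ennreal (\<phi>1 x))) (density lborel (\<lambda>x. ennreal (\<phi>2 x))).
        \<integral>z. norm (snd z - fst z) \<partial>\<gamma>)"

end

theory Submission
  imports Defs
begin

text \<open>Split a tour into its n deliveries x i to y i, which cost the sum of dist (x i) (y i)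
  (about n times the expected distance by the law of large numbers), and its n moves from a
  delivery to the next pickup. Partition the support into cells of diameter below 2 delta. The
  moves define a transport plan between the empirical delivery and pickup distributions on the
  cells; by the law of large numbers its marginals converge to the cell masses of the delivery and
  pickup densities, so it lies close to a genuine coupling of these masses. Any such coupling
  induces a coupling of the two densities whose cost is at most its cost between cell centres
  plus 2 delta, hence costs at least the Wasserstein distance W minus 2 delta. So the moves cost
  at least n (W - 4 delta - o(1)), and delta tends to 0.\<close>

lemma sum_cyclic_shift:
  fixes f :: "nat \<Rightarrow> 'a::comm_monoid_add"
  shows "(\<Sum>t<n. f ((t + 1) mod n)) = (\<Sum>t<n. f t)"
proof (cases n)
  case (Suc k)
  have "(\<Sum>t<Suc k. f ((t + 1) mod Suc k)) = (\<Sum>t<k. f (Suc t)) + f 0"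
    by (simp add: sum.lessThan_Suc)
  also have "\<dots> = (\<Sum>t<Suc k. f t)"
    by (subst sum.lessThan_Suc_shift) (simp add: add.commute)
  finally show ?thesis using Suc by simp
qed simp

lemma sc_tour_length_eq:
  assumes "\<sigma> permutes {..<n}"
  shows "sc_tour_length x y n \<sigma>
           = (\<Sum>i<n. dist (x i) (y i)) + (\<Sum>t<n. dist (y (\<sigma> t)) (x (\<sigma> ((t + 1) mod n))))"
  unfolding sc_tour_length_def sum.distrib
  using sum.permute[OF assms, of "\<lambda>i. dist (x i) (y i)"] by (simp add: o_def)

lemma le_sc_opt:
  assumes "\<And>\<sigma>. \<sigma> permutes {..<n} \<Longrightarrow> C \<le> sc_tour_length x y n \<sigma>"
  shows "C \<le> sc_opt x y n"
proof -
  have "finite {\<sigma>. \<sigma> permutes {..<n}}" "id \<in> {\<sigma>. \<sigma> permutes {..<n}}"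
    by (simp_all add: finite_permutations permutes_id)
  then show ?thesis unfolding sc_opt_def using assms by (subst Min_ge_iff) blast+
qed

definition discrete_coupling :: "nat \<Rightarrow> (nat \<Rightarrow> real) \<Rightarrow> (nat \<Rightarrow> real) \<Rightarrow> (nat \<Rightarrow> nat \<Rightarrow> real) \<Rightarrow> bool" where
  "discrete_coupling m a b P \<longleftrightarrow> (\<forall>j k. 0 \<le> P j k) \<and>
     (\<forall>j<m. (\<Sum>k<m. P j k) = a j) \<and> (\<forall>k<m. (\<Sum>j<m. P j k) = b k)"

lemma mult_min_ratio:
  fixes \<alpha> a :: real
  assumes "0 \<le> \<alpha>" "0 \<le> a"
  shows "\<alpha> * min 1 (a / \<alpha>) \<le> a" and "\<alpha> * (1 - min 1 (a / \<alpha>)) \<le> \<bar>\<alpha> - a\<bar>"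
proof -
  consider "\<alpha> = 0" | "0 < \<alpha>" "a \<le> \<alpha>" | "0 < \<alpha>" "\<alpha> < a" using assms by linarith
  then have "\<alpha> * min 1 (a / \<alpha>) \<le> a \<and> \<alpha> * (1 - min 1 (a / \<alpha>)) \<le> \<bar>\<alpha> - a\<bar>"
  proof cases
    case 2
    then have "min 1 (a / \<alpha>) = a / \<alpha>" by simp
    then show ?thesis using 2 by (simp add: right_diff_distrib)
  qed (use assms in \<open>auto simp: min_def\<close>)
  then show "\<alpha> * min 1 (a / \<alpha>) \<le> a" and "\<alpha> * (1 - min 1 (a / \<alpha>)) \<le> \<bar>\<alpha> - a\<bar>"
    by auto
qed

text \<open>Scaling row j of Q by min 1 (a j / row sum) and column k by min 1 (b k / column sum)
  removes at most the excess mass of the marginals.\<close>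
lemma exists_subplan:
  fixes Q :: "nat \<Rightarrow> nat \<Rightarrow> real" and a b :: "nat \<Rightarrow> real"
  assumes Q0: "\<And>j k. 0 \<le> Q j k" and a0: "\<And>j. 0 \<le> a j" and b0: "\<And>k. 0 \<le> b k"
  obtains R where "\<And>j k. 0 \<le> R j k" "\<And>j k. R j k \<le> Q j k"
    "\<And>j. (\<Sum>k<m. R j k) \<le> a j" "\<And>k. (\<Sum>j<m. R j k) \<le> b k"
    "(\<Sum>j<m. \<Sum>k<m. Q j k - R j k)
       \<le> (\<Sum>j<m. \<bar>(\<Sum>k<m. Q j k) - a j\<bar>) + (\<Sum>k<m. \<bar>(\<Sum>j<m. Q j k) - b k\<bar>)"
proof
  define \<alpha> where "\<alpha> j = (\<Sum>k<m. Q j k)" for j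
  define \<beta> where "\<beta> k = (\<Sum>j<m. Q j k)" for k
  define s where "s j = min 1 (a j / \<alpha> j)" for j
  define t where "t k = min 1 (b k / \<beta> k)" for k
  define R where "R j k = Q j k * s j * t k" for j k
  have \<alpha>0: "0 \<le> \<alpha> j" for j unfolding \<alpha>_def by (intro sum_nonneg Q0)
  have \<beta>0: "0 \<le> \<beta> k" for k unfolding \<beta>_def by (intro sum_nonneg Q0)
  have s: "0 \<le> s j" "s j \<le> 1" for j using a0 \<alpha>0 unfolding s_def by auto
  have t: "0 \<le> t k" "t k \<le> 1" for k using b0 \<beta>0 unfolding t_def by auto
  show "0 \<le> R j k" for j k unfolding R_def using Q0 s t by simp
  show "R j k \<le> Q j k" for j k
    unfolding R_def using Q0[of j k] s t by (simp add: mult_le_one mult.assoc mult_left_le)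
  show "(\<Sum>k<m. R j k) \<le> a j" for j
  proof -
    have "(\<Sum>k<m. R j k) \<le> (\<Sum>k<m. Q j k * s j)"
      unfolding R_def using Q0 s t by (intro sum_mono) (simp add: mult_left_le)
    also have "\<dots> = \<alpha> j * s j" unfolding \<alpha>_def by (simp add: sum_distrib_right)
    finally show ?thesis using mult_min_ratio(1)[OF \<alpha>0[of j] a0[of j]] unfolding s_def by linarith
  qed
  show "(\<Sum>j<m. R j k) \<le> b k" for k
  proof -
    have "(\<Sum>j<m. R j k) \<le> (\<Sum>j<m. Q j k * t k)"
      unfolding R_def mult.assoc using Q0 s t by (intro sum_mono mult_left_mono) (auto intro: mult_left_le_one_le)
    also have "\<dots> = \<beta> k * t k" unfolding \<beta>_def by (simp add: sum_distrib_right)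
    finally show ?thesis using mult_min_ratio(1)[OF \<beta>0[of k] b0[of k]] unfolding t_def by linarith
  qed
  have "(\<Sum>j<m. \<Sum>k<m. Q j k - R j k) \<le> (\<Sum>j<m. \<Sum>k<m. Q j k * (1 - s j) + Q j k * (1 - t k))"
  proof (intro sum_mono)
    fix j k
    have "1 - s j * t k \<le> (1 - s j) + (1 - t k)"
      using mult_nonneg_nonneg[of "1 - s j" "1 - t k"] s t by (simp add: algebra_simps)
    then have "Q j k * (1 - s j * t k) \<le> Q j k * ((1 - s j) + (1 - t k))"
      using Q0 by (rule mult_left_mono)
    then show "Q j k - R j k \<le> Q j k * (1 - s j) + Q j k * (1 - t k)"
      unfolding R_def by (simp add: algebra_simps)
  qed
  also have "\<dots> = (\<Sum>j<m. \<alpha> j * (1 - s j)) + (\<Sum>k<m. \<beta> k * (1 - t k))"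
    unfolding \<alpha>_def \<beta>_def sum.distrib sum_distrib_right
    by (subst (2) sum.swap) (rule refl)
  also have "\<dots> \<le> (\<Sum>j<m. \<bar>\<alpha> j - a j\<bar>) + (\<Sum>k<m. \<bar>\<beta> k - b k\<bar>)"
    unfolding s_def t_def using mult_min_ratio(2) \<alpha>0 \<beta>0 a0 b0 by (intro add_mono sum_mono) auto
  finally show "(\<Sum>j<m. \<Sum>k<m. Q j k - R j k)
       \<le> (\<Sum>j<m. \<bar>(\<Sum>k<m. Q j k) - a j\<bar>) + (\<Sum>k<m. \<bar>(\<Sum>j<m. Q j k) - b k\<bar>)"
    unfolding \<alpha>_def \<beta>_def .
qed

text \<open>The missing row and column masses r, c have the same total D; adding the product
  plan r c / D completes R to a coupling.\<close>
lemma exists_coupling_above: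
  fixes R :: "nat \<Rightarrow> nat \<Rightarrow> real" and a b :: "nat \<Rightarrow> real"
  assumes R0: "\<And>j k. 0 \<le> R j k"
    and rows: "\<And>j. (\<Sum>k<m. R j k) \<le> a j" and cols: "\<And>k. (\<Sum>j<m. R j k) \<le> b k"
    and sa: "(\<Sum>j<m. a j) = 1" and sb: "(\<Sum>k<m. b k) = 1"
  obtains P where "discrete_coupling m a b P" "\<And>j k. R j k \<le> P j k"
proof
  define r where "r j = a j - (\<Sum>k<m. R j k)" for j
  define c where "c k = b k - (\<Sum>j<m. R j k)" for k
  define D where "D = 1 - (\<Sum>j<m. \<Sum>k<m. R j k)"
  define P where "P j k = R j k + r j * c k / D" for j k
  have r0: "0 \<le> r j" for j using rows[of j] unfolding r_def by simp
  have c0: "0 \<le> c k" for k using cols[of k] unfolding c_def by simp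
  have sr: "(\<Sum>j<m. r j) = D" unfolding r_def D_def using sa by (simp add: sum_subtractf)
  have sc: "(\<Sum>k<m. c k) = D"
    unfolding c_def D_def using sb sum.swap[of "\<lambda>j k. R j k" "{..<m}" "{..<m}"]
    by (simp add: sum_subtractf)
  have D0: "0 \<le> D" using sr r0 by (metis sum_nonneg)
  show RP: "R j k \<le> P j k" for j k unfolding P_def using r0 c0 D0 by simp
  have rD: "r j * D / D = r j" if "j < m" for j
    using that sr r0 sum_nonneg_eq_0_iff[of "{..<m}" r] by (cases "D = 0") auto
  have cD: "c k * D / D = c k" if "k < m" for k
    using that sc c0 sum_nonneg_eq_0_iff[of "{..<m}" c] by (cases "D = 0") auto
  show "discrete_coupling m a b P"
    unfolding discrete_coupling_def
  proof (intro conjI allI impI)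
    show "0 \<le> P j k" for j k using R0[of j k] RP[of j k] by linarith
    show "(\<Sum>k<m. P j k) = a j" if "j < m" for j
    proof -
      have "(\<Sum>k<m. P j k) = (\<Sum>k<m. R j k) + r j * (\<Sum>k<m. c k) / D"
        unfolding P_def by (simp add: sum.distrib sum_distrib_left sum_divide_distrib)
      then show ?thesis using rD[OF that] sc unfolding r_def by simp
    qed
    show "(\<Sum>j<m. P j k) = b k" if "k < m" for k
    proof -
      have "(\<Sum>j<m. P j k) = (\<Sum>j<m. R j k) + c k * (\<Sum>j<m. r j) / D"
        unfolding P_def
        by (simp add: sum.distrib sum_distrib_left sum_divide_distrib sum_distrib_right mult.commute)
      then show ?thesis using cD[OF that] sr unfolding c_def by simp
    qed
  qed
qed

lemma exists_coupling_near:
  fixes Q :: "nat \<Rightarrow> nat \<Rightarrow> real" and a b :: "nat \<Rightarrow> real"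
  assumes Q0: "\<And>j k. 0 \<le> Q j k" and a0: "\<And>j. 0 \<le> a j" and b0: "\<And>k. 0 \<le> b k"
    and sa: "(\<Sum>j<m. a j) = 1" and sb: "(\<Sum>k<m. b k) = 1" and sQ: "(\<Sum>j<m. \<Sum>k<m. Q j k) = 1"
  obtains P where "discrete_coupling m a b P"
    "(\<Sum>j<m. \<Sum>k<m. \<bar>P j k - Q j k\<bar>)
       \<le> 2 * ((\<Sum>j<m. \<bar>(\<Sum>k<m. Q j k) - a j\<bar>) + (\<Sum>k<m. \<bar>(\<Sum>j<m. Q j k) - b k\<bar>))"
proof -
  obtain R where R0: "\<And>j k. 0 \<le> R j k" and RQ: "\<And>j k. R j k \<le> Q j k"
    and rows: "\<And>j. (\<Sum>k<m. R j k) \<le> a j" and cols: "\<And>k. (\<Sum>j<m. R j k) \<le> b k"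
    and err: "(\<Sum>j<m. \<Sum>k<m. Q j k - R j k)
       \<le> (\<Sum>j<m. \<bar>(\<Sum>k<m. Q j k) - a j\<bar>) + (\<Sum>k<m. \<bar>(\<Sum>j<m. Q j k) - b k\<bar>)"
    using exists_subplan[of Q a b m, OF Q0 a0 b0] by blast
  obtain P where P: "discrete_coupling m a b P" and RP: "\<And>j k. R j k \<le> P j k"
    using exists_coupling_above[of R m a b, OF R0 rows cols sa sb] by blast
  have "(\<Sum>j<m. \<Sum>k<m. P j k) = (\<Sum>j<m. a j)"
    using P unfolding discrete_coupling_def by (intro sum.cong) auto
  then have same_excess: "(\<Sum>j<m. \<Sum>k<m. P j k - R j k) = (\<Sum>j<m. \<Sum>k<m. Q j k - R j k)"
    using sa sQ by (simp only: sum_subtractf)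
  have "(\<Sum>j<m. \<Sum>k<m. \<bar>P j k - Q j k\<bar>) \<le> (\<Sum>j<m. \<Sum>k<m. (P j k - R j k) + (Q j k - R j k))"
    using RP RQ by (intro sum_mono) (simp add: abs_le_iff)
  also have "\<dots> = 2 * (\<Sum>j<m. \<Sum>k<m. Q j k - R j k)"
    using same_excess by (simp only: sum.distrib mult_2)
  also have "\<dots> \<le> 2 * ((\<Sum>j<m. \<bar>(\<Sum>k<m. Q j k) - a j\<bar>) + (\<Sum>k<m. \<bar>(\<Sum>j<m. Q j k) - b k\<bar>))"
    using err by (rule mult_left_mono) simp
  finally show ?thesis by (rule that[OF P])
qed

lemma sum_sum_weighted_le:
  fixes P Q l :: "nat \<Rightarrow> nat \<Rightarrow> real"
  assumes "\<And>j k. j < m \<Longrightarrow> k < m \<Longrightarrow> \<bar>l j k\<bar> \<le> L"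
  shows "(\<Sum>j<m. \<Sum>k<m. P j k * l j k)
           \<le> (\<Sum>j<m. \<Sum>k<m. Q j k * l j k) + L * (\<Sum>j<m. \<Sum>k<m. \<bar>P j k - Q j k\<bar>)"
proof -
  have "P j k * l j k \<le> Q j k * l j k + L * \<bar>P j k - Q j k\<bar>" if "j < m" "k < m" for j k
  proof -
    have "\<bar>(P j k - Q j k) * l j k\<bar> \<le> \<bar>P j k - Q j k\<bar> * L"
      unfolding abs_mult using assms[OF that] by (intro mult_left_mono) auto
    then show ?thesis by (simp add: algebra_simps abs_le_iff)
  qed
  then have "(\<Sum>j<m. \<Sum>k<m. P j k * l j k) \<le> (\<Sum>j<m. \<Sum>k<m. Q j k * l j k + L * \<bar>P j k - Q j k\<bar>)"
    by (intro sum_mono) auto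
  then show ?thesis by (simp add: sum.distrib sum_distrib_left)
qed

text \<open>Compare Q with a coupling of a and b that is close to it in total variation.\<close>
lemma plan_cost_ge_near_marginals:
  fixes Q w :: "nat \<Rightarrow> nat \<Rightarrow> real" and a b :: "nat \<Rightarrow> real"
  assumes Q0: "\<And>j k. 0 \<le> Q j k" and sQ: "(\<Sum>j<m. \<Sum>k<m. Q j k) = 1"
    and a0: "\<And>j. 0 \<le> a j" and b0: "\<And>k. 0 \<le> b k"
    and sa: "(\<Sum>j<m. a j) = 1" and sb: "(\<Sum>k<m. b k) = 1"
    and w: "\<And>j k. j < m \<Longrightarrow> k < m \<Longrightarrow> \<bar>w j k - K\<bar> \<le> L"
    and W: "\<And>P. discrete_coupling m a b P \<Longrightarrow> W \<le> (\<Sum>j<m. \<Sum>k<m. P j k * w j k)"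
  shows "W - K - 2 * L * ((\<Sum>j<m. \<bar>(\<Sum>k<m. Q j k) - a j\<bar>) + (\<Sum>k<m. \<bar>(\<Sum>j<m. Q j k) - b k\<bar>))
           \<le> (\<Sum>j<m. \<Sum>k<m. Q j k * (w j k - K))"
proof -
  define err where "err = (\<Sum>j<m. \<bar>(\<Sum>k<m. Q j k) - a j\<bar>) + (\<Sum>k<m. \<bar>(\<Sum>j<m. Q j k) - b k\<bar>)"
  obtain P where P: "discrete_coupling m a b P"
    and near: "(\<Sum>j<m. \<Sum>k<m. \<bar>P j k - Q j k\<bar>) \<le> 2 * err"
    unfolding err_def using exists_coupling_near[of Q a b m, OF Q0 a0 b0 sa sb sQ] by blast
  have "m \<noteq> 0" using sa by (intro notI) simp
  then have L0: "0 \<le> L" using w[of 0 0] by simp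
  have "(\<Sum>j<m. \<Sum>k<m. P j k) = 1" using P sa unfolding discrete_coupling_def by simp
  have "(\<Sum>j<m. \<Sum>k<m. P j k * (w j k - K)) = (\<Sum>j<m. \<Sum>k<m. P j k * w j k - K * P j k)"
    by (intro sum.cong refl) (simp add: algebra_simps)
  also have "\<dots> = (\<Sum>j<m. \<Sum>k<m. P j k * w j k) - K"
    using \<open>(\<Sum>j<m. \<Sum>k<m. P j k) = 1\<close> by (simp only: sum_subtractf sum_distrib_left[symmetric])
  finally have "W - K \<le> (\<Sum>j<m. \<Sum>k<m. P j k * (w j k - K))" using W[OF P] by simp
  also have "\<dots> \<le> (\<Sum>j<m. \<Sum>k<m. Q j k * (w j k - K)) + L * (\<Sum>j<m. \<Sum>k<m. \<bar>P j k - Q j k\<bar>)"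
    using w by (rule sum_sum_weighted_le)
  also have "\<dots> \<le> (\<Sum>j<m. \<Sum>k<m. Q j k * (w j k - K)) + L * (2 * err)"
    using near L0 by (intro add_left_mono mult_left_mono)
  also have "\<dots> = (\<Sum>j<m. \<Sum>k<m. Q j k * (w j k - K)) + 2 * L * err"
    by (simp only: mult.left_commute[of L] mult.assoc)
  finally show ?thesis unfolding err_def diff_le_eq .
qed

locale cell_partition =
  fixes \<Omega> :: "'a::metric_space set" and A :: "nat \<Rightarrow> 'a set" and m :: nat
  assumes cell_disjoint: "\<And>j k. j \<noteq> k \<Longrightarrow> A j \<inter> A k = {}"
    and cells_cover: "\<Omega> \<subseteq> (\<Union>j<m. A j)"
    and cell_subset: "\<And>j. A j \<subseteq> \<Omega>"
    and cell_borel: "\<And>j. A j \<in> sets borel"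
begin

lemma Union_cells: "(\<Union>j<m. A j) = \<Omega>"
  using cells_cover cell_subset by blast

lemma disjoint_family_cells_Int: "disjoint_family_on (\<lambda>j. A j \<inter> B) {..<m}"
  using cell_disjoint by (auto simp: disjoint_family_on_def)

lemma sum_indicator_cells:
  assumes "x \<in> \<Omega>"
  shows "(\<Sum>j<m. indicator (A j) x) = (1::real)"
proof -
  obtain j0 where j0: "j0 < m" "x \<in> A j0" using assms cells_cover by auto
  have "(\<Sum>j<m. indicator (A j) x) = (\<Sum>j\<in>{j0}. indicator (A j) x :: real)"
    using cell_disjoint j0 by (intro sum.mono_neutral_right) (auto simp: indicator_def)
  then show ?thesis using j0 by simp
qed

definition cell_freq :: "(nat \<Rightarrow> 'a) \<Rightarrow> nat \<Rightarrow> nat \<Rightarrow> real" where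
  "cell_freq z n j = (\<Sum>i<n. indicator (A j) (z i)) / real n"

definition transition_freq :: "(nat \<Rightarrow> 'a) \<Rightarrow> (nat \<Rightarrow> 'a) \<Rightarrow> nat \<Rightarrow> (nat \<Rightarrow> nat) \<Rightarrow> nat \<Rightarrow> nat \<Rightarrow> real" where
  "transition_freq x y n \<sigma> j k =
     (\<Sum>t<n. indicator (A j) (y (\<sigma> t)) * indicator (A k) (x (\<sigma> ((t + 1) mod n)))) / real n"

lemma transition_freq_nonneg: "0 \<le> transition_freq x y n \<sigma> j k"
  unfolding transition_freq_def by (intro divide_nonneg_nonneg sum_nonneg) auto

lemma transition_freq_row_sum:
  assumes "\<sigma> permutes {..<n}" and "\<And>i. x i \<in> \<Omega>"
  shows "(\<Sum>k<m. transition_freq x y n \<sigma> j k) = cell_freq y n j"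
proof -
  have "(\<Sum>k<m. transition_freq x y n \<sigma> j k)
      = (\<Sum>t<n. indicator (A j) (y (\<sigma> t)) * (\<Sum>k<m. indicator (A k) (x (\<sigma> ((t + 1) mod n))))) / n"
    unfolding transition_freq_def sum_divide_distrib[symmetric] sum_distrib_left
    by (subst sum.swap) (rule refl)
  also have "\<dots> = (\<Sum>t<n. indicator (A j) (y (\<sigma> t))) / n"
    using sum_indicator_cells assms(2) by simp
  also have "\<dots> = cell_freq y n j"
    unfolding cell_freq_def using sum.permute[OF assms(1), of "\<lambda>i. indicator (A j) (y i) :: real"]
    by (simp add: o_def)
  finally show ?thesis .
qed

lemma transition_freq_col_sum:
  assumes "\<sigma> permutes {..<n}" and "\<And>i. y i \<in> \<Omega>"
  shows "(\<Sum>j<m. transition_freq x y n \<sigma> j k) = cell_freq x n k"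
proof -
  have "(\<Sum>j<m. transition_freq x y n \<sigma> j k)
      = (\<Sum>t<n. (\<Sum>j<m. indicator (A j) (y (\<sigma> t))) * indicator (A k) (x (\<sigma> ((t + 1) mod n)))) / n"
    unfolding transition_freq_def sum_divide_distrib[symmetric] sum_distrib_right
    by (subst sum.swap) (rule refl)
  also have "\<dots> = (\<Sum>t<n. indicator (A k) (x (\<sigma> ((t + 1) mod n)))) / n"
    using sum_indicator_cells assms(2) by simp
  also have "\<dots> = cell_freq x n k"
    unfolding cell_freq_def sum_cyclic_shift[of "\<lambda>i. indicator (A k) (x (\<sigma> i))" n]
    using sum.permute[OF assms(1), of "\<lambda>i. indicator (A k) (x i) :: real"] by (simp add: o_def)
  finally show ?thesis .
qed

lemma sum_cell_freq:
  assumes "0 < n" and "\<And>i. z i \<in> \<Omega>"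
  shows "(\<Sum>j<m. cell_freq z n j) = 1"
proof -
  have "(\<Sum>j<m. cell_freq z n j) = (\<Sum>i<n. \<Sum>j<m. indicator (A j) (z i)) / n"
    unfolding cell_freq_def sum_divide_distrib[symmetric] by (subst sum.swap) (rule refl)
  then show ?thesis using assms sum_indicator_cells by simp
qed

end

locale fine_cell_partition = cell_partition +
  fixes c :: "nat \<Rightarrow> 'a" and \<delta> :: real
  assumes delta_pos: "0 < \<delta>"
    and center_in: "\<And>j. j < m \<Longrightarrow> c j \<in> \<Omega>"
    and dist_center: "\<And>j x. x \<in> A j \<Longrightarrow> dist x (c j) < \<delta>"
begin

lemma dist_centers_le:
  assumes "x \<in> A j" "y \<in> A k"
  shows "dist (c j) (c k) \<le> dist x y + 2 * \<delta>"
proof -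
  have "dist (c j) (c k) \<le> dist (c j) x + dist x y + dist y (c k)"
    using dist_triangle[of "c j" "c k" x] dist_triangle[of x "c k" y] by linarith
  then show ?thesis using dist_center[OF assms(1)] dist_center[OF assms(2)] by (simp add: dist_commute)
qed

lemma dist_le_centers:
  assumes "x \<in> A j" "y \<in> A k"
  shows "dist x y \<le> dist (c j) (c k) + 2 * \<delta>"
proof -
  have "dist x y \<le> dist x (c j) + dist (c j) (c k) + dist (c k) y"
    using dist_triangle[of x y "c j"] dist_triangle[of "c j" y "c k"] by linarith
  then show ?thesis using dist_center[OF assms(1)] dist_center[OF assms(2)] by (simp add: dist_commute)
qed

lemma cell_cost_le_dist:
  assumes "x \<in> \<Omega>" "y \<in> \<Omega>"
  shows "(\<Sum>j<m. \<Sum>k<m. indicator (A j) y * indicator (A k) x * (dist (c j) (c k) - 2 * \<delta>))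
           \<le> dist y x"
proof -
  have "(\<Sum>j<m. \<Sum>k<m. indicator (A j) y * indicator (A k) x * (dist (c j) (c k) - 2 * \<delta>))
      \<le> (\<Sum>j<m. \<Sum>k<m. indicator (A j) y * indicator (A k) x * dist y x)"
    using dist_centers_le by (intro sum_mono) (fastforce simp: indicator_def)
  also have "\<dots> = (\<Sum>j<m. indicator (A j) y) * (\<Sum>k<m. indicator (A k) x) * dist y x"
    by (subst sum_product) (simp only: sum_distrib_right)
  also have "\<dots> = dist y x" using sum_indicator_cells assms by simp
  finally show ?thesis .
qed

lemma transition_cost_le:
  assumes "\<And>i. x i \<in> \<Omega>" "\<And>i. y i \<in> \<Omega>" "0 < n"
  shows "n * (\<Sum>j<m. \<Sum>k<m. transition_freq x y n \<sigma> j k * (dist (c j) (c k) - 2 * \<delta>))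
           \<le> (\<Sum>t<n. dist (y (\<sigma> t)) (x (\<sigma> ((t + 1) mod n))))"
proof -
  let ?I = "\<lambda>t j k. indicator (A j) (y (\<sigma> t)) * indicator (A k) (x (\<sigma> ((t + 1) mod n)))
                      * (dist (c j) (c k) - 2 * \<delta>) :: real"
  have "n * (\<Sum>j<m. \<Sum>k<m. transition_freq x y n \<sigma> j k * (dist (c j) (c k) - 2 * \<delta>))
      = (\<Sum>j<m. \<Sum>k<m. \<Sum>t<n. ?I t j k)"
  proof -
    have "real n * ((\<Sum>t<n. G t) / n * r) = (\<Sum>t<n. G t * r)" for G r
      using assms(3) by (simp add: sum_distrib_right)
    then show ?thesis unfolding transition_freq_def by (simp only: sum_distrib_left)
  qed
  also have "\<dots> = (\<Sum>t<n. \<Sum>j<m. \<Sum>k<m. ?I t j k)"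
    by (subst sum.swap) (simp add: sum.swap[of _ "{..<m}" "{..<n}"])
  also have "\<dots> \<le> (\<Sum>t<n. dist (y (\<sigma> t)) (x (\<sigma> ((t + 1) mod n))))"
    using assms by (intro sum_mono cell_cost_le_dist)
  finally show ?thesis .
qed

lemma transition_cost_ge:
  assumes \<sigma>: "\<sigma> permutes {..<n}" and n: "0 < n"
    and x: "\<And>i. x i \<in> \<Omega>" and y: "\<And>i. y i \<in> \<Omega>"
    and diam: "\<And>u v. u \<in> \<Omega> \<Longrightarrow> v \<in> \<Omega> \<Longrightarrow> dist u v \<le> D"
    and a0: "\<And>j. 0 \<le> a j" and b0: "\<And>k. 0 \<le> b k"
    and sa: "(\<Sum>j<m. a j) = 1" and sb: "(\<Sum>k<m. b k) = 1"
    and W: "\<And>P. discrete_coupling m a b P \<Longrightarrow> W \<le> (\<Sum>j<m. \<Sum>k<m. P j k * (dist (c j) (c k) + 2 * \<delta>))"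
  shows "n * (W - 4 * \<delta> - 2 * (D + 2 * \<delta>) *
               ((\<Sum>j<m. \<bar>cell_freq y n j - a j\<bar>) + (\<Sum>k<m. \<bar>cell_freq x n k - b k\<bar>)))
           \<le> (\<Sum>t<n. dist (y (\<sigma> t)) (x (\<sigma> ((t + 1) mod n))))"
proof -
  define Q where "Q = transition_freq x y n \<sigma>"
  have rows: "(\<Sum>k<m. Q j k) = cell_freq y n j" for j
    unfolding Q_def by (rule transition_freq_row_sum[OF \<sigma> x])
  have cols: "(\<Sum>j<m. Q j k) = cell_freq x n k" for k
    unfolding Q_def by (rule transition_freq_col_sum[OF \<sigma> y])
  have Q0: "0 \<le> Q j k" for j k unfolding Q_def by (rule transition_freq_nonneg)
  have sQ: "(\<Sum>j<m. \<Sum>k<m. Q j k) = 1" using rows sum_cell_freq[OF n y] by simp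
  have "\<bar>dist (c j) (c k) + 2 * \<delta> - 4 * \<delta>\<bar> \<le> D + 2 * \<delta>" if "j < m" "k < m" for j k
    unfolding abs_le_iff using diam[OF center_in[OF that(1)] center_in[OF that(2)]] delta_pos
      zero_le_dist[of "c j" "c k"] by linarith
  from plan_cost_ge_near_marginals[OF Q0 sQ a0 b0 sa sb this W]
  have "W - 4 * \<delta> - 2 * (D + 2 * \<delta>) *
          ((\<Sum>j<m. \<bar>cell_freq y n j - a j\<bar>) + (\<Sum>k<m. \<bar>cell_freq x n k - b k\<bar>))
        \<le> (\<Sum>j<m. \<Sum>k<m. Q j k * (dist (c j) (c k) - 2 * \<delta>))"
    unfolding rows cols by simp
  then have "n * (W - 4 * \<delta> - 2 * (D + 2 * \<delta>) *
               ((\<Sum>j<m. \<bar>cell_freq y n j - a j\<bar>) + (\<Sum>k<m. \<bar>cell_freq x n k - b k\<bar>)))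
        \<le> n * (\<Sum>j<m. \<Sum>k<m. Q j k * (dist (c j) (c k) - 2 * \<delta>))"
    by (rule mult_left_mono) simp
  also have "\<dots> \<le> (\<Sum>t<n. dist (y (\<sigma> t)) (x (\<sigma> ((t + 1) mod n))))"
    unfolding Q_def by (rule transition_cost_le[OF x y n])
  finally show ?thesis .
qed

end

text \<open>Cover the compact set by finitely many delta-balls around points c 0, ..., c (m - 1)
  of the set and let cell j be the part of ball j not covered by earlier balls.\<close>
lemma exists_fine_cell_partition:
  fixes \<Omega> :: "'a::metric_space set"
  assumes "compact \<Omega>" and "0 < \<delta>"
  obtains A m c where "fine_cell_partition \<Omega> A m c \<delta>"
proof -
  obtain K where K: "finite K" "K \<subseteq> \<Omega>" "\<Omega> \<subseteq> (\<Union>x\<in>K. ball x \<delta>)"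
    using seq_compact_imp_totally_bounded[OF compact_imp_seq_compact[OF assms(1)]] assms(2) by metis
  obtain cs where cs: "set cs = K" using finite_list[OF K(1)] by blast
  define m where "m = length cs"
  define c where "c j = cs ! j" for j
  define A where "A j = \<Omega> \<inter> ball (c j) \<delta> - (\<Union>i<j. ball (c i) \<delta>)" for j
  have "fine_cell_partition \<Omega> A m c \<delta>"
  proof
    show "A j \<inter> A k = {}" if "j \<noteq> k" for j k
    proof (cases "j < k")
      case True then show ?thesis unfolding A_def by blast
    next
      case False then have "k < j" using that by simp
      then show ?thesis unfolding A_def by blast
    qed
    show "\<Omega> \<subseteq> (\<Union>j<m. A j)"
    proof
      fix x assume x: "x \<in> \<Omega>"
      then obtain z where "z \<in> K" "x \<in> ball z \<delta>" using K(3) by blast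
      moreover obtain j0 where "j0 < m" "c j0 = z"
        using \<open>z \<in> K\<close> cs unfolding c_def m_def by (auto simp: in_set_conv_nth)
      ultimately have "j0 < m \<and> x \<in> ball (c j0) \<delta>" by simp
      then obtain j where j: "j < m \<and> x \<in> ball (c j) \<delta>"
        and least: "\<forall>i<j. \<not> (i < m \<and> x \<in> ball (c i) \<delta>)"
        using exists_least_iff[of "\<lambda>j. j < m \<and> x \<in> ball (c j) \<delta>"] by blast
      then have "x \<in> A j" using x unfolding A_def by auto
      with j show "x \<in> (\<Union>j<m. A j)" by blast
    qed
    show "A j \<subseteq> \<Omega>" for j unfolding A_def by blast
    show "A j \<in> sets borel" for j
    proof -
      have "open (\<Union>i<j. ball (c i) \<delta>)" by (intro open_UN ballI open_ball)
      then show ?thesis unfolding A_def using compact_imp_closed[OF assms(1)]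
        by (intro sets.Diff sets.Int borel_closed borel_open open_ball)
    qed
    show "0 < \<delta>" by (rule assms(2))
    show "c j \<in> \<Omega>" if "j < m" for j using that cs K(2) unfolding c_def m_def by auto
    show "dist x (c j) < \<delta>" if "x \<in> A j" for j x using that unfolding A_def by (simp add: dist_commute)
  qed
  then show ?thesis by (rule that)
qed

context prob_space
begin

lemma bounded_iid_deviation_le:
  fixes Z :: "nat \<Rightarrow> 'a \<Rightarrow> real"
  assumes indep: "indep_vars (\<lambda>_. borel) Z UNIV"
    and ident: "\<And>i. distr M borel (Z i) = distr M borel (Z 0)"
    and bounded: "\<And>i \<omega>. \<omega> \<in> space M \<Longrightarrow> Z i \<omega> \<in> {a..b}" and "a < b"
    and "0 \<le> \<epsilon>"
  shows "prob {\<omega>\<in>space M. \<epsilon> \<le> \<bar>(\<Sum>i<Suc n. Z i \<omega>) / Suc n - expectation (Z 0)\<bar>}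
           \<le> 2 * exp (-2 * \<epsilon>\<^sup>2 / (b - a)\<^sup>2) ^ Suc n"
proof -
  have [measurable]: "Z i \<in> borel_measurable M" for i
    using indep unfolding indep_vars_def by simp
  have iid: "Hoeffding_ineq_iid M {..<Suc n} Z (Z 0) a b"
  proof unfold_locales
    show "indep_vars (\<lambda>_. borel) Z {..<Suc n}" by (rule indep_vars_subset[OF indep]) simp
    show "AE x in M. Z 0 x \<in> {a..b}" using bounded by simp
  qed (auto intro: ident)
  have exponent: "real (Suc n) * (-2 * \<epsilon>\<^sup>2 / (b - a)\<^sup>2) = -2 * real (Suc n) * \<epsilon>\<^sup>2 / (b - a)\<^sup>2"
    by (simp only: times_divide_eq_right mult.left_commute[of "real (Suc n)"] mult.assoc)
  have power: "exp (-2 * \<epsilon>\<^sup>2 / (b - a)\<^sup>2) ^ Suc n = exp (-2 * real (Suc n) * \<epsilon>\<^sup>2 / (b - a)\<^sup>2)"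
    unfolding exp_of_nat_mult[symmetric] exponent ..
  have "prob {\<omega>\<in>space M. \<bar>(\<Sum>i\<in>{..<Suc n}. Z i \<omega>) / card {..<Suc n} - expectation (Z 0)\<bar> \<ge> \<epsilon>}
      \<le> 2 * exp (-2 * real (card {..<Suc n}) * \<epsilon>\<^sup>2 / (b - a)\<^sup>2)"
    by (rule Hoeffding_ineq_iid.Hoeffding_ineq_abs_ge'[OF iid assms(5,4)])
      (metis lessThan_iff zero_less_Suc empty_iff)
  then show ?thesis unfolding power card_lessThan .
qed

text \<open>Hoeffding's inequality makes the deviation probabilities summable, so by Borel-Cantelli
  almost surely only finitely many averages deviate by epsilon or more.\<close>
lemma bounded_iid_average_eventually_close:
  fixes Z :: "nat \<Rightarrow> 'a \<Rightarrow> real"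
  assumes indep: "indep_vars (\<lambda>_. borel) Z UNIV"
    and ident: "\<And>i. distr M borel (Z i) = distr M borel (Z 0)"
    and bounded: "\<And>i \<omega>. \<omega> \<in> space M \<Longrightarrow> Z i \<omega> \<in> {a..b}" and "a < b"
    and "0 < \<epsilon>"
  shows "AE \<omega> in M. eventually (\<lambda>n. \<bar>(\<Sum>i<n. Z i \<omega>) / n - expectation (Z 0)\<bar> < \<epsilon>) sequentially"
proof -
  have [measurable]: "Z i \<in> borel_measurable M" for i
    using indep unfolding indep_vars_def by simp
  define B where "B n = {\<omega>\<in>space M. \<epsilon> \<le> \<bar>(\<Sum>i<Suc n. Z i \<omega>) / Suc n - expectation (Z 0)\<bar>}" for n
  have B_sets: "B n \<in> sets M" for n unfolding B_def by measurable
  define q where "q = exp (-2 * \<epsilon>\<^sup>2 / (b - a)\<^sup>2)"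
  have deviation: "measure M (B n) \<le> 2 * q ^ Suc n" for n
    unfolding B_def q_def by (rule bounded_iid_deviation_le[OF assms(1-4) less_imp_le[OF assms(5)]])
  have "0 < q" "q < 1" unfolding q_def using assms(4,5) by auto
  then have "summable (\<lambda>n. 2 * q ^ Suc n)"
    by (intro summable_mult summable_Suc_iff[THEN iffD2] summable_geometric) simp
  then have "summable (\<lambda>n. measure M (B n))"
    by (rule summable_comparison_test'[where N = 0]) (simp add: deviation del: power_Suc)
  then have "AE \<omega> in M. eventually (\<lambda>n. \<omega> \<in> space M - B n) sequentially"
    using borel_cantelli_AE1[OF B_sets] by (simp add: less_top[symmetric])
  then show ?thesis
  proof (rule AE_mp, intro AE_I2 impI)
    fix \<omega> assume "eventually (\<lambda>n. \<omega> \<in> space M - B n) sequentially"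
    then have "eventually (\<lambda>n. \<bar>(\<Sum>i<Suc n. Z i \<omega>) / Suc n - expectation (Z 0)\<bar> < \<epsilon>) sequentially"
      by eventually_elim (auto simp: B_def not_le)
    then show "eventually (\<lambda>n. \<bar>(\<Sum>i<n. Z i \<omega>) / n - expectation (Z 0)\<bar> < \<epsilon>) sequentially"
      by (subst eventually_sequentially_Suc[symmetric]) simp
  qed
qed

lemma bounded_iid_average_converges:
  fixes Z :: "nat \<Rightarrow> 'a \<Rightarrow> real"
  assumes "indep_vars (\<lambda>_. borel) Z UNIV"
    and "\<And>i. distr M borel (Z i) = distr M borel (Z 0)"
    and "\<And>i \<omega>. \<omega> \<in> space M \<Longrightarrow> Z i \<omega> \<in> {a..b}" and "a < b"
  shows "AE \<omega> in M. (\<lambda>n. (\<Sum>i<n. Z i \<omega>) / n) \<longlonglongrightarrow> expectation (Z 0)"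
proof -
  have "AE \<omega> in M. \<forall>k. eventually
          (\<lambda>n. \<bar>(\<Sum>i<n. Z i \<omega>) / n - expectation (Z 0)\<bar> < inverse (Suc k)) sequentially"
    unfolding AE_all_countable using bounded_iid_average_eventually_close[OF assms] by simp
  then show ?thesis
  proof (rule AE_mp, intro AE_I2 impI)
    fix \<omega>
    assume close: "\<forall>k. eventually
             (\<lambda>n. \<bar>(\<Sum>i<n. Z i \<omega>) / n - expectation (Z 0)\<bar> < inverse (Suc k)) sequentially"
    show "(\<lambda>n. (\<Sum>i<n. Z i \<omega>) / n) \<longlonglongrightarrow> expectation (Z 0)"
    proof (rule tendstoI)
      fix e :: real assume "0 < e"
      then obtain k where k: "inverse (Suc k) < e" using reals_Archimedean by blast
      show "eventually (\<lambda>n. dist ((\<Sum>i<n. Z i \<omega>) / n) (expectation (Z 0)) < e) sequentially"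
        using close[rule_format, of k] by eventually_elim (use k in \<open>simp add: dist_real_def\<close>)
    qed
  qed
qed

end

lemma (in cell_partition) sum_measure_cells_Int:
  assumes "finite_measure M" "sets M = sets borel" "UNIV - \<Omega> \<in> null_sets M" "B \<in> sets borel"
  shows "(\<Sum>j<m. measure M (A j \<inter> B)) = measure M B"
proof -
  interpret finite_measure M by (rule assms(1))
  have "(\<Sum>j<m. measure M (A j \<inter> B)) = measure M (\<Union>j<m. A j \<inter> B)"
    using assms(2,4) cell_borel disjoint_family_cells_Int
    by (intro finite_measure_finite_Union[symmetric]) auto
  also have "(\<Union>j<m. A j \<inter> B) = B - (UNIV - \<Omega>)" using Union_cells by blast
  also have "measure M \<dots> = measure M B"
    using assms(2-4) by (intro measure_Diff_null_set) simp
  finally show ?thesis .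
qed

text \<open>A coupling of the cell masses is realised by a measure on pairs whose density with
  respect to the product measure is constant on each product of cells.\<close>
locale cell_plan = cell_partition \<Omega> A m + pair_prob_space \<mu> \<nu>
  for \<Omega> :: "'a::euclidean_space set" and A m and \<mu> \<nu> :: "'a measure" +
  fixes P :: "nat \<Rightarrow> nat \<Rightarrow> real"
  assumes sets_\<mu>: "sets \<mu> = sets borel" and sets_\<nu>: "sets \<nu> = sets borel"
    and null_\<mu>: "UNIV - \<Omega> \<in> null_sets \<mu>" and null_\<nu>: "UNIV - \<Omega> \<in> null_sets \<nu>"
    and plan: "discrete_coupling m (\<lambda>j. measure \<mu> (A j)) (\<lambda>k. measure \<nu> (A k)) P"
begin

text \<open>On a null cell the division yields 0, which is harmless since P vanishes there.\<close>
definition plan_weight :: "nat \<Rightarrow> nat \<Rightarrow> real" where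
  "plan_weight j k = P j k / (measure \<mu> (A j) * measure \<nu> (A k))"

definition plan_density :: "'a \<times> 'a \<Rightarrow> real" where
  "plan_density z = (\<Sum>j<m. \<Sum>k<m. plan_weight j k * indicator (A j \<times> A k) z)"

definition plan_coupling :: "('a \<times> 'a) measure" where
  "plan_coupling = density (\<mu> \<Otimes>\<^sub>M \<nu>) (\<lambda>z. ennreal (plan_density z))"

lemma space_\<mu>[simp]: "space \<mu> = UNIV" and space_\<nu>[simp]: "space \<nu> = UNIV"
  using sets_eq_imp_space_eq[OF sets_\<mu>] sets_eq_imp_space_eq[OF sets_\<nu>] by simp_all

lemma sets_pair[simp]: "sets (\<mu> \<Otimes>\<^sub>M \<nu>) = sets (borel \<Otimes>\<^sub>M borel)"
  using sets_\<mu> sets_\<nu> by (intro sets_pair_measure_cong) simp_all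

lemma space_pair[simp]: "space (\<mu> \<Otimes>\<^sub>M \<nu>) = UNIV"
  by (simp add: space_pair_measure)

lemma P_nonneg: "0 \<le> P j k"
  using plan unfolding discrete_coupling_def by blast

lemma plan_weight_nonneg: "0 \<le> plan_weight j k"
  unfolding plan_weight_def using P_nonneg by simp

lemma plan_density_nonneg: "0 \<le> plan_density z"
  unfolding plan_density_def using plan_weight_nonneg by (intro sum_nonneg) auto

lemma plan_weight_mult:
  assumes "j < m" "k < m"
  shows "plan_weight j k * (measure \<mu> (A j) * measure \<nu> (A k)) = P j k"
proof (cases "measure \<mu> (A j) = 0 \<or> measure \<nu> (A k) = 0")
  case True
  have "P j k \<le> measure \<mu> (A j)" "P j k \<le> measure \<nu> (A k)"
    using plan assms member_le_sum[of k "{..<m}" "P j"] member_le_sum[of j "{..<m}" "\<lambda>j. P j k"]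
    unfolding discrete_coupling_def by (auto intro: P_nonneg)
  then show ?thesis using True P_nonneg[of j k] by (auto simp: plan_weight_def)
qed (simp add: plan_weight_def)

lemma plan_weight_row:
  assumes "j < m" "S \<subseteq> A j" "S \<in> sets borel"
  shows "(\<Sum>k<m. plan_weight j k * (measure \<mu> S * measure \<nu> (A k))) = measure \<mu> S"
proof (cases "measure \<mu> (A j) = 0")
  case True
  then have "measure \<mu> S = 0"
    using M1.finite_measure_mono[OF assms(2)] cell_borel sets_\<mu> measure_nonneg[of \<mu> S] by simp
  then show ?thesis by simp
next
  case False
  have "(\<Sum>k<m. plan_weight j k * (measure \<mu> S * measure \<nu> (A k)))
      = (\<Sum>k<m. plan_weight j k * (measure \<mu> (A j) * measure \<nu> (A k)) * measure \<mu> S / measure \<mu> (A j))"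
    using False by (intro sum.cong refl) (simp add: field_simps)
  also have "\<dots> = (\<Sum>k<m. plan_weight j k * (measure \<mu> (A j) * measure \<nu> (A k))) * measure \<mu> S / measure \<mu> (A j)"
    by (simp only: sum_distrib_right sum_divide_distrib)
  also have "\<dots> = measure \<mu> S"
    using plan assms(1) False plan_weight_mult[OF assms(1)] unfolding discrete_coupling_def by simp
  finally show ?thesis .
qed

lemma plan_weight_col:
  assumes "k < m" "S \<subseteq> A k" "S \<in> sets borel"
  shows "(\<Sum>j<m. plan_weight j k * (measure \<mu> (A j) * measure \<nu> S)) = measure \<nu> S"
proof (cases "measure \<nu> (A k) = 0")
  case True
  then have "measure \<nu> S = 0"
    using M2.finite_measure_mono[OF assms(2)] cell_borel sets_\<nu> measure_nonneg[of \<nu> S] by simp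
  then show ?thesis by simp
next
  case False
  have "(\<Sum>j<m. plan_weight j k * (measure \<mu> (A j) * measure \<nu> S))
      = (\<Sum>j<m. plan_weight j k * (measure \<mu> (A j) * measure \<nu> (A k)) * measure \<nu> S / measure \<nu> (A k))"
    using False by (intro sum.cong refl) (simp add: field_simps)
  also have "\<dots> = (\<Sum>j<m. plan_weight j k * (measure \<mu> (A j) * measure \<nu> (A k))) * measure \<nu> S / measure \<nu> (A k)"
    by (simp only: sum_distrib_right sum_divide_distrib)
  also have "\<dots> = measure \<nu> S"
    using plan assms(1) False plan_weight_mult[OF _ assms(1)] unfolding discrete_coupling_def by simp
  finally show ?thesis .
qed

lemma integrable_indicator_Times:
  assumes "S \<in> sets borel" "T \<in> sets borel"
  shows "integrable (\<mu> \<Otimes>\<^sub>M \<nu>) (indicator (S \<times> T) :: 'a \<times> 'a \<Rightarrow> real)"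
  using assms by (intro integrable_real_indicator) (auto simp: less_top[symmetric] P.emeasure_finite)

lemma integral_indicator_Times:
  assumes "S \<in> sets borel" "T \<in> sets borel"
  shows "(\<integral>z. indicator (S \<times> T) z \<partial>(\<mu> \<Otimes>\<^sub>M \<nu>)) = measure \<mu> S * measure \<nu> T"
  using assms sets_\<mu> sets_\<nu>
  by (simp add: measure_def M2.emeasure_pair_measure_Times enn2real_mult)

lemma integral_cell_sum:
  assumes S: "\<And>j. S j \<in> sets borel" and T: "\<And>k. T k \<in> sets borel"
  shows "(\<integral>z. (\<Sum>j<m. \<Sum>k<m. d j k * indicator (S j \<times> T k) z) \<partial>(\<mu> \<Otimes>\<^sub>M \<nu>))
           = (\<Sum>j<m. \<Sum>k<m. d j k * (measure \<mu> (S j) * measure \<nu> (T k)))"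
proof -
  have int: "integrable (\<mu> \<Otimes>\<^sub>M \<nu>) (\<lambda>z. d j k * indicator (S j \<times> T k) z)" for j k
    by (intro integrable_mult_right integrable_indicator_Times S T)
  have "(\<integral>z. (\<Sum>j<m. \<Sum>k<m. d j k * indicator (S j \<times> T k) z) \<partial>(\<mu> \<Otimes>\<^sub>M \<nu>))
      = (\<Sum>j<m. \<integral>z. (\<Sum>k<m. d j k * indicator (S j \<times> T k) z) \<partial>(\<mu> \<Otimes>\<^sub>M \<nu>))"
    using int by (intro Bochner_Integration.integral_sum Bochner_Integration.integrable_sum)
  also have "\<dots> = (\<Sum>j<m. \<Sum>k<m. \<integral>z. d j k * indicator (S j \<times> T k) z \<partial>(\<mu> \<Otimes>\<^sub>M \<nu>))"
    using int by (intro sum.cong refl Bochner_Integration.integral_sum)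
  also have "\<dots> = (\<Sum>j<m. \<Sum>k<m. d j k * (measure \<mu> (S j) * measure \<nu> (T k)))"
    using S T by (intro sum.cong refl) (simp only: integral_mult_right_zero integral_indicator_Times)
  finally show ?thesis .
qed

lemma plan_density_measurable[measurable]: "plan_density \<in> borel_measurable (\<mu> \<Otimes>\<^sub>M \<nu>)"
  unfolding plan_density_def measurable_cong_sets[OF sets_pair refl] using cell_borel by measurable

lemma integrable_plan_density: "integrable (\<mu> \<Otimes>\<^sub>M \<nu>) plan_density"
  unfolding plan_density_def
  by (intro Bochner_Integration.integrable_sum integrable_mult_right integrable_indicator_Times cell_borel)

lemma emeasure_plan_coupling:
  assumes "S \<in> sets (\<mu> \<Otimes>\<^sub>M \<nu>)"
  shows "emeasure plan_coupling S = ennreal (\<integral>z. plan_density z * indicator S z \<partial>(\<mu> \<Otimes>\<^sub>M \<nu>))"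
proof -
  have "emeasure plan_coupling S = (\<integral>\<^sup>+z. ennreal (plan_density z) * indicator S z \<partial>(\<mu> \<Otimes>\<^sub>M \<nu>))"
    unfolding plan_coupling_def using assms by (simp add: emeasure_density)
  also have "\<dots> = (\<integral>\<^sup>+z. ennreal (plan_density z * indicator S z) \<partial>(\<mu> \<Otimes>\<^sub>M \<nu>))"
    by (intro nn_integral_cong) (simp add: indicator_def)
  also have "\<dots> = ennreal (\<integral>z. plan_density z * indicator S z \<partial>(\<mu> \<Otimes>\<^sub>M \<nu>))"
    using integrable_mult_indicator[OF assms integrable_plan_density] plan_density_nonneg
    by (intro nn_integral_eq_integral) (simp_all add: mult.commute)
  finally show ?thesis .
qed

lemma emeasure_plan_coupling_Times:
  assumes B: "B \<in> sets borel" and C: "C \<in> sets borel"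
  shows "emeasure plan_coupling (B \<times> C)
           = ennreal (\<Sum>j<m. \<Sum>k<m. plan_weight j k * (measure \<mu> (A j \<inter> B) * measure \<nu> (A k \<inter> C)))"
proof -
  have "plan_density z * indicator (B \<times> C) z
      = (\<Sum>j<m. \<Sum>k<m. plan_weight j k * indicator ((A j \<inter> B) \<times> (A k \<inter> C)) z)" for z
    unfolding plan_density_def sum_distrib_right
    by (intro sum.cong refl) (auto simp: indicator_def)
  then have "emeasure plan_coupling (B \<times> C)
      = ennreal (\<integral>z. (\<Sum>j<m. \<Sum>k<m. plan_weight j k * indicator ((A j \<inter> B) \<times> (A k \<inter> C)) z) \<partial>(\<mu> \<Otimes>\<^sub>M \<nu>))"
    using B C by (simp only: emeasure_plan_coupling sets_pair pair_measureI)
  also have "\<dots> = ennreal (\<Sum>j<m. \<Sum>k<m. plan_weight j k * (measure \<mu> (A j \<inter> B) * measure \<nu> (A k \<inter> C)))"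
    using B C cell_borel by (subst integral_cell_sum) auto
  finally show ?thesis .
qed

lemma sets_plan_coupling: "sets plan_coupling = sets (borel \<Otimes>\<^sub>M borel)"
  by (simp add: plan_coupling_def)

lemma distr_fst_plan_coupling: "distr plan_coupling borel fst = \<mu>"
proof (rule measure_eqI)
  show "sets (distr plan_coupling borel fst) = sets \<mu>" by (simp add: sets_\<mu>)
  fix B assume "B \<in> sets (distr plan_coupling borel fst)"
  then have B: "B \<in> sets borel" by simp
  have "fst \<in> plan_coupling \<rightarrow>\<^sub>M borel"
    unfolding measurable_cong_sets[OF sets_plan_coupling refl] by simp
  then have "emeasure (distr plan_coupling borel fst) B = emeasure plan_coupling (B \<times> UNIV)"
    using B by (simp add: emeasure_distr vimage_fst plan_coupling_def)
  also have "\<dots> = ennreal (\<Sum>j<m. measure \<mu> (A j \<inter> B))"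
    using B cell_borel
    by (simp add: emeasure_plan_coupling_Times plan_weight_row sets.Int)
  also have "\<dots> = emeasure \<mu> B"
    using B sets_\<mu> null_\<mu>
    by (simp add: sum_measure_cells_Int M1.finite_measure_axioms M1.emeasure_eq_measure)
  finally show "emeasure (distr plan_coupling borel fst) B = emeasure \<mu> B" .
qed

lemma distr_snd_plan_coupling: "distr plan_coupling borel snd = \<nu>"
proof (rule measure_eqI)
  show "sets (distr plan_coupling borel snd) = sets \<nu>" by (simp add: sets_\<nu>)
  fix B assume "B \<in> sets (distr plan_coupling borel snd)"
  then have B: "B \<in> sets borel" by simp
  have "snd \<in> plan_coupling \<rightarrow>\<^sub>M borel"
    unfolding measurable_cong_sets[OF sets_plan_coupling refl] by simp
  then have "emeasure (distr plan_coupling borel snd) B = emeasure plan_coupling (UNIV \<times> B)"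
    using B by (simp add: emeasure_distr vimage_snd plan_coupling_def)
  also have "\<dots> = ennreal (\<Sum>k<m. measure \<nu> (A k \<inter> B))"
    using B cell_borel
    by (simp add: emeasure_plan_coupling_Times plan_weight_col sets.Int sum.swap[of _ "{..<m}" "{..<m}"])
  also have "\<dots> = emeasure \<nu> B"
    using B sets_\<nu> null_\<nu>
    by (simp add: sum_measure_cells_Int M2.finite_measure_axioms M2.emeasure_eq_measure)
  finally show "emeasure (distr plan_coupling borel snd) B = emeasure \<nu> B" .
qed

lemma plan_coupling_outside: "emeasure plan_coupling (UNIV - \<Omega> \<times> \<Omega>) = 0"
proof -
  have \<Omega>: "\<Omega> \<in> sets borel"
    using cell_borel unfolding Union_cells[symmetric] by (intro sets.finite_UN) auto
  then have S: "UNIV - \<Omega> \<times> \<Omega> \<in> sets (\<mu> \<Otimes>\<^sub>M \<nu>)"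
    using sets.compl_sets[of "\<Omega> \<times> \<Omega>" "\<mu> \<Otimes>\<^sub>M \<nu>"] by simp
  have zero: "plan_density z * indicator (UNIV - \<Omega> \<times> \<Omega>) z = 0" for z
  proof (cases "z \<in> \<Omega> \<times> \<Omega>")
    case False
    then have "plan_density z = 0"
      unfolding plan_density_def using cell_subset by (intro sum.neutral ballI) (auto simp: indicator_def)
    then show ?thesis by simp
  qed simp
  then show ?thesis using emeasure_plan_coupling[OF S] by (simp only: zero) simp
qed

lemma plan_coupling_in_couplings: "plan_coupling \<in> couplings \<Omega> \<mu> \<nu>"
  unfolding couplings_def
  using sets_plan_coupling plan_coupling_outside distr_fst_plan_coupling distr_snd_plan_coupling
  by blast

lemma integral_plan_coupling_le:
  assumes u: "\<And>j k x y. x \<in> A j \<Longrightarrow> y \<in> A k \<Longrightarrow> norm (y - x) \<le> u j k"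
  shows "(\<integral>z. norm (snd z - fst z) \<partial>plan_coupling) \<le> (\<Sum>j<m. \<Sum>k<m. P j k * u j k)"
proof -
  define h where "h z = (\<Sum>j<m. \<Sum>k<m. plan_weight j k * u j k * indicator (A j \<times> A k) z)" for z
  have h_int: "integrable (\<mu> \<Otimes>\<^sub>M \<nu>) h"
    unfolding h_def
    by (intro Bochner_Integration.integrable_sum integrable_mult_right integrable_indicator_Times cell_borel)
  have cost_le: "plan_density z * norm (snd z - fst z) \<le> h z" for z
    unfolding plan_density_def h_def sum_distrib_right
    using u plan_weight_nonneg by (intro sum_mono) (auto simp: indicator_def mult_left_mono)
  have norm_meas: "(\<lambda>z. norm (snd z - fst z)) \<in> borel_measurable (\<mu> \<Otimes>\<^sub>M \<nu>)"
    unfolding measurable_cong_sets[OF sets_pair refl] by measurable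
  have "(\<integral>z. norm (snd z - fst z) \<partial>plan_coupling)
      = (\<integral>z. plan_density z * norm (snd z - fst z) \<partial>(\<mu> \<Otimes>\<^sub>M \<nu>))"
    unfolding plan_coupling_def using norm_meas plan_density_nonneg
    by (subst integral_density) auto
  also have "\<dots> \<le> (\<integral>z. h z \<partial>(\<mu> \<Otimes>\<^sub>M \<nu>))"
  proof (rule integral_mono[OF _ h_int cost_le])
    have "norm (plan_density z * norm (snd z - fst z)) \<le> norm (h z)" for z
    proof -
      have "0 \<le> plan_density z * norm (snd z - fst z)" using plan_density_nonneg by simp
      then show ?thesis
        unfolding real_norm_def using cost_le[of z] abs_ge_self[of "h z"] by linarith
    qed
    then show "integrable (\<mu> \<Otimes>\<^sub>M \<nu>) (\<lambda>z. plan_density z * norm (snd z - fst z))"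
      using norm_meas by (intro Bochner_Integration.integrable_bound[OF h_int]) auto
  qed
  also have "\<dots> = (\<Sum>j<m. \<Sum>k<m. plan_weight j k * u j k * (measure \<mu> (A j) * measure \<nu> (A k)))"
    unfolding h_def by (rule integral_cell_sum[OF cell_borel cell_borel])
  also have "\<dots> = (\<Sum>j<m. \<Sum>k<m. P j k * u j k)"
    using plan_weight_mult by (intro sum.cong refl) (simp add: mult.commute mult.left_commute)
  finally show ?thesis .
qed

lemma transport_cost_le_cell_plan:
  assumes "\<And>j k x y. x \<in> A j \<Longrightarrow> y \<in> A k \<Longrightarrow> norm (y - x) \<le> u j k"
  shows "(INF \<gamma>\<in>couplings \<Omega> \<mu> \<nu>. \<integral>z. norm (snd z - fst z) \<partial>\<gamma>) \<le> (\<Sum>j<m. \<Sum>k<m. P j k * u j k)"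
proof -
  have "bdd_below ((\<lambda>\<gamma>. \<integral>z. norm (snd z - fst z) \<partial>\<gamma>) ` couplings \<Omega> \<mu> \<nu>)"
    by (rule bdd_belowI[of _ 0]) auto
  then have "(INF \<gamma>\<in>couplings \<Omega> \<mu> \<nu>. \<integral>z. norm (snd z - fst z) \<partial>\<gamma>)
      \<le> (\<integral>z. norm (snd z - fst z) \<partial>plan_coupling)"
    by (rule cINF_lower[OF _ plan_coupling_in_couplings])
  also have "\<dots> \<le> (\<Sum>j<m. \<Sum>k<m. P j k * u j k)"
    by (rule integral_plan_coupling_le[OF assms])
  finally show ?thesis .
qed

end

lemma ereal_le_liminf_of_tendsto:
  fixes l s :: "nat \<Rightarrow> real"
  assumes "l \<longlonglongrightarrow> L" and "eventually (\<lambda>n. l n \<le> s n) sequentially"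
  shows "ereal L \<le> liminf (\<lambda>n. ereal (s n))"
proof -
  have "liminf (\<lambda>n. ereal (l n)) = ereal L"
    using assms(1) by (intro lim_imp_Liminf) (simp_all add: tendsto_ereal)
  moreover have "liminf (\<lambda>n. ereal (l n)) \<le> liminf (\<lambda>n. ereal (s n))"
    using assms(2) by (intro Liminf_mono) simp
  ultimately show ?thesis by simp
qed

lemma le_liminf_sc_opt:
  fixes x y :: "nat \<Rightarrow> 'a::euclidean_space"
  assumes cells: "fine_cell_partition \<Omega> A m c \<delta>"
    and x: "\<And>i. x i \<in> \<Omega>" and y: "\<And>i. y i \<in> \<Omega>"
    and diam: "\<And>u v. u \<in> \<Omega> \<Longrightarrow> v \<in> \<Omega> \<Longrightarrow> dist u v \<le> D"
    and a0: "\<And>j. 0 \<le> a j" and b0: "\<And>k. 0 \<le> b k"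
    and sa: "(\<Sum>j<m. a j) = 1" and sb: "(\<Sum>k<m. b k) = 1"
    and W: "\<And>P. discrete_coupling m a b P \<Longrightarrow> W \<le> (\<Sum>j<m. \<Sum>k<m. P j k * (dist (c j) (c k) + 2 * \<delta>))"
    and lim_dist: "(\<lambda>n. (\<Sum>i<n. dist (x i) (y i)) / n) \<longlonglongrightarrow> E"
    and lim_y: "\<And>j. (\<lambda>n. cell_partition.cell_freq A y n j) \<longlonglongrightarrow> a j"
    and lim_x: "\<And>k. (\<lambda>n. cell_partition.cell_freq A x n k) \<longlonglongrightarrow> b k"
  shows "ereal (E + W - 4 * \<delta>) \<le> liminf (\<lambda>n. ereal (sc_opt x y n / n))"
proof -
  interpret fine_cell_partition \<Omega> A m c \<delta> by (rule cells)
  define err where "err n = (\<Sum>j<m. \<bar>cell_freq y n j - a j\<bar>) + (\<Sum>k<m. \<bar>cell_freq x n k - b k\<bar>)" for n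
  define lb where "lb n = (\<Sum>i<n. dist (x i) (y i)) / n + (W - 4 * \<delta> - 2 * (D + 2 * \<delta>) * err n)" for n
  have "err \<longlonglongrightarrow> (\<Sum>j<m. \<bar>a j - a j\<bar>) + (\<Sum>k<m. \<bar>b k - b k\<bar>)"
    unfolding err_def[abs_def] by (intro tendsto_intros lim_x lim_y)
  then have lim_lb: "lb \<longlonglongrightarrow> E + (W - 4 * \<delta> - 2 * (D + 2 * \<delta>) * 0)"
    unfolding lb_def[abs_def] by (intro tendsto_intros lim_dist) simp
  have bound: "lb n \<le> sc_opt x y n / n" if n: "0 < n" for n
  proof -
    have "n * lb n \<le> sc_opt x y n"
    proof (rule le_sc_opt)
      fix \<sigma> assume \<sigma>: "\<sigma> permutes {..<n}"
      have "n * lb n = (\<Sum>i<n. dist (x i) (y i)) + n * (W - 4 * \<delta> - 2 * (D + 2 * \<delta>) * err n)"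
        unfolding lb_def using n by (simp add: algebra_simps)
      also have "\<dots> \<le> sc_tour_length x y n \<sigma>"
        unfolding sc_tour_length_eq[OF \<sigma>] err_def
        using transition_cost_ge[OF \<sigma> n x y diam a0 b0 sa sb W] by simp
      finally show "n * lb n \<le> sc_tour_length x y n \<sigma>" .
    qed
    then show ?thesis using n by (simp add: field_simps)
  qed
  have "eventually (\<lambda>n. lb n \<le> sc_opt x y n / n) sequentially"
    using eventually_gt_at_top[of "0::nat"] by eventually_elim (rule bound)
  from ereal_le_liminf_of_tendsto[OF lim_lb this] show ?thesis by (simp add: add_diff_eq)
qed

locale stacker_crane_sample = prob_space M for M :: "'m measure" +
  fixes \<Omega> :: "'d::euclidean_space set" and X Y :: "nat \<Rightarrow> 'm \<Rightarrow> 'd" and \<phi>P \<phi>D :: "'d \<Rightarrow> real"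
  assumes compact_\<Omega>: "compact \<Omega>"
    and \<phi>P_nonneg: "\<And>x. 0 \<le> \<phi>P x" and \<phi>D_nonneg: "\<And>x. 0 \<le> \<phi>D x"
    and distributed_X: "\<And>i. distributed M lborel (X i) (\<lambda>x. ennreal (\<phi>P x))"
    and distributed_Y: "\<And>i. distributed M lborel (Y i) (\<lambda>x. ennreal (\<phi>D x))"
    and X_in_\<Omega>: "\<And>i \<omega>. \<omega> \<in> space M \<Longrightarrow> X i \<omega> \<in> \<Omega>"
    and Y_in_\<Omega>: "\<And>i \<omega>. \<omega> \<in> space M \<Longrightarrow> Y i \<omega> \<in> \<Omega>"
    and indep: "indep_vars (\<lambda>_. borel) (\<lambda>j. case j of Inl i \<Rightarrow> X i | Inr i \<Rightarrow> Y i) UNIV"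
begin

definition \<mu>P :: "'d measure" where "\<mu>P = density lborel (\<lambda>x. ennreal (\<phi>P x))"
definition \<mu>D :: "'d measure" where "\<mu>D = density lborel (\<lambda>x. ennreal (\<phi>D x))"

lemma X_measurable[measurable]: "X i \<in> borel_measurable M"
  using distributed_measurable[OF distributed_X[of i]] by (simp add: measurable_cong_sets[OF refl sets_lborel])

lemma Y_measurable[measurable]: "Y i \<in> borel_measurable M"
  using distributed_measurable[OF distributed_Y[of i]] by (simp add: measurable_cong_sets[OF refl sets_lborel])

lemma sets_\<mu>P[simp, measurable_cong]: "sets \<mu>P = sets borel" and space_\<mu>P[simp]: "space \<mu>P = UNIV"
  and sets_\<mu>D[simp, measurable_cong]: "sets \<mu>D = sets borel" and space_\<mu>D[simp]: "space \<mu>D = UNIV"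
  by (simp_all add: \<mu>P_def \<mu>D_def)

lemma distr_X: "distr M borel (X i) = \<mu>P"
proof -
  have "distr M borel (X i) = distr M lborel (X i)" by (rule distr_cong) (simp_all add: sets_lborel)
  also have "\<dots> = \<mu>P" unfolding \<mu>P_def by (rule distributed_distr_eq_density[OF distributed_X])
  finally show ?thesis .
qed

lemma distr_Y: "distr M borel (Y i) = \<mu>D"
proof -
  have "distr M borel (Y i) = distr M lborel (Y i)" by (rule distr_cong) (simp_all add: sets_lborel)
  also have "\<dots> = \<mu>D" unfolding \<mu>D_def by (rule distributed_distr_eq_density[OF distributed_Y])
  finally show ?thesis .
qed

lemma prob_space_\<mu>P: "prob_space \<mu>P" and prob_space_\<mu>D: "prob_space \<mu>D"
  using prob_space_distr[OF X_measurable[of 0]] prob_space_distr[OF Y_measurable[of 0]]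
  by (simp_all add: distr_X distr_Y)

lemma \<mu>P_null: "UNIV - \<Omega> \<in> null_sets \<mu>P"
proof -
  have "\<Omega> \<in> sets borel" using compact_imp_closed[OF compact_\<Omega>] by (rule borel_closed)
  then have "emeasure \<mu>P (UNIV - \<Omega>) = emeasure M (X 0 -` (UNIV - \<Omega>) \<inter> space M)"
    unfolding distr_X[of 0, symmetric] by (intro emeasure_distr) auto
  also have "X 0 -` (UNIV - \<Omega>) \<inter> space M = {}" using X_in_\<Omega> by auto
  finally show ?thesis using \<open>\<Omega> \<in> sets borel\<close> by (simp add: null_sets_def)
qed

lemma \<mu>D_null: "UNIV - \<Omega> \<in> null_sets \<mu>D"
proof -
  have "\<Omega> \<in> sets borel" using compact_imp_closed[OF compact_\<Omega>] by (rule borel_closed)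
  then have "emeasure \<mu>D (UNIV - \<Omega>) = emeasure M (Y 0 -` (UNIV - \<Omega>) \<inter> space M)"
    unfolding distr_Y[of 0, symmetric] by (intro emeasure_distr) auto
  also have "Y 0 -` (UNIV - \<Omega>) \<inter> space M = {}" using Y_in_\<Omega> by auto
  finally show ?thesis using \<open>\<Omega> \<in> sets borel\<close> by (simp add: null_sets_def)
qed

lemma indep_var_X_Y: "indep_var borel (X i) borel (Y i)"
proof -
  let ?W = "\<lambda>j. case j of Inl i \<Rightarrow> X i | Inr i \<Rightarrow> Y i"
  have "indep_var (PiM {Inl i} (\<lambda>_. borel)) (\<lambda>\<omega>. restrict (\<lambda>j. ?W j \<omega>) {Inl i})
                  (PiM {Inr i} (\<lambda>_. borel)) (\<lambda>\<omega>. restrict (\<lambda>j. ?W j \<omega>) {Inr i})"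
    by (rule indep_var_restrict[OF indep]) auto
  then have "indep_var borel ((\<lambda>g. g (Inl i)) \<circ> (\<lambda>\<omega>. restrict (\<lambda>j. ?W j \<omega>) {Inl i}))
                       borel ((\<lambda>g. g (Inr i)) \<circ> (\<lambda>\<omega>. restrict (\<lambda>j. ?W j \<omega>) {Inr i}))"
    by (rule indep_var_compose) (simp_all add: measurable_component_singleton)
  moreover have "(\<lambda>g. g (Inl i)) \<circ> (\<lambda>\<omega>. restrict (\<lambda>j. ?W j \<omega>) {Inl i}) = X i"
    and "(\<lambda>g. g (Inr i)) \<circ> (\<lambda>\<omega>. restrict (\<lambda>j. ?W j \<omega>) {Inr i}) = Y i"
    by (auto simp: fun_eq_iff)
  ultimately show ?thesis by simp
qed

lemma distr_X_Y: "distr M (borel \<Otimes>\<^sub>M borel) (\<lambda>\<omega>. (X i \<omega>, Y i \<omega>)) = \<mu>P \<Otimes>\<^sub>M \<mu>D"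
  using indep_var_X_Y[of i] unfolding indep_var_distribution_eq by (simp add: distr_X distr_Y)

lemma indep_vars_pairs:
  assumes [measurable]: "f \<in> borel_measurable (borel \<Otimes>\<^sub>M borel)"
  shows "indep_vars (\<lambda>_. borel) (\<lambda>i \<omega>. f (X i \<omega>, Y i \<omega>)) UNIV"
proof -
  let ?W = "\<lambda>j. case j of Inl i \<Rightarrow> X i | Inr i \<Rightarrow> Y i"
  have "indep_vars (\<lambda>i. PiM {Inl i, Inr i} (\<lambda>_. borel))
          (\<lambda>i \<omega>. restrict (\<lambda>j. ?W j \<omega>) {Inl i, Inr i}) UNIV"
    by (rule indep_vars_restrict[OF indep]) (auto simp: disjoint_family_on_def)
  moreover have "(\<lambda>g. f (g (Inl i), g (Inr i))) \<in> PiM {Inl i, Inr i} (\<lambda>_. borel) \<rightarrow>\<^sub>M borel" for i :: nat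
    by (intro measurable_compose[OF measurable_Pair assms] measurable_component_singleton) simp_all
  ultimately have "indep_vars (\<lambda>_. borel)
      (\<lambda>i \<omega>. (\<lambda>g. f (g (Inl i), g (Inr i))) (restrict (\<lambda>j. ?W j \<omega>) {Inl i, Inr i})) UNIV"
    by (rule indep_vars_compose2)
  then show ?thesis by simp
qed

lemma average_pairs_converges:
  fixes f :: "'d \<times> 'd \<Rightarrow> real"
  assumes [measurable]: "f \<in> borel_measurable (borel \<Otimes>\<^sub>M borel)" and "a < b"
    and bounded: "\<And>x y. x \<in> \<Omega> \<Longrightarrow> y \<in> \<Omega> \<Longrightarrow> f (x, y) \<in> {a..b}"
  shows "AE \<omega> in M. (\<lambda>n. (\<Sum>i<n. f (X i \<omega>, Y i \<omega>)) / n) \<longlonglongrightarrow> (\<integral>z. f z \<partial>(\<mu>P \<Otimes>\<^sub>M \<mu>D))"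
proof -
  have pair_meas: "(\<lambda>\<omega>. (X i \<omega>, Y i \<omega>)) \<in> M \<rightarrow>\<^sub>M borel \<Otimes>\<^sub>M borel" for i by measurable
  have distr_f: "distr M borel (\<lambda>\<omega>. f (X i \<omega>, Y i \<omega>)) = distr (\<mu>P \<Otimes>\<^sub>M \<mu>D) borel f" for i
    unfolding distr_X_Y[of i, symmetric] using pair_meas by (subst distr_distr) (auto simp: o_def)
  have "(\<integral>z. f z \<partial>(\<mu>P \<Otimes>\<^sub>M \<mu>D)) = expectation (\<lambda>\<omega>. f (X 0 \<omega>, Y 0 \<omega>))"
    unfolding distr_X_Y[of 0, symmetric] using pair_meas by (subst integral_distr) auto
  moreover have "AE \<omega> in M. (\<lambda>n. (\<Sum>i<n. f (X i \<omega>, Y i \<omega>)) / n)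
                    \<longlonglongrightarrow> expectation (\<lambda>\<omega>. f (X 0 \<omega>, Y 0 \<omega>))"
    using X_in_\<Omega> Y_in_\<Omega> bounded
    by (intro bounded_iid_average_converges[OF indep_vars_pairs[OF assms(1)] _ _ \<open>a < b\<close>])
      (auto simp: distr_f)
  ultimately show ?thesis by simp
qed

lemma pair_prob_space_\<mu>P_\<mu>D: "pair_prob_space \<mu>P \<mu>D"
  by (intro pair_prob_space.intro pair_sigma_finite.intro prob_space_imp_sigma_finite
      prob_space_\<mu>P prob_space_\<mu>D)

lemma \<phi>P_measurable[measurable]: "\<phi>P \<in> borel_measurable borel"
proof -
  have "(\<lambda>x. enn2real (ennreal (\<phi>P x))) \<in> borel_measurable lborel"
    by (intro borel_measurable_enn2real distributed_borel_measurable[OF distributed_X[of 0]])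
  then show ?thesis using \<phi>P_nonneg by (simp add: measurable_cong_sets[OF sets_lborel refl])
qed

lemma \<phi>D_measurable[measurable]: "\<phi>D \<in> borel_measurable borel"
proof -
  have "(\<lambda>x. enn2real (ennreal (\<phi>D x))) \<in> borel_measurable lborel"
    by (intro borel_measurable_enn2real distributed_borel_measurable[OF distributed_Y[of 0]])
  then show ?thesis using \<phi>D_nonneg by (simp add: measurable_cong_sets[OF sets_lborel refl])
qed

lemma integrable_dist_X_Y: "integrable (\<mu>P \<Otimes>\<^sub>M \<mu>D) (\<lambda>z. dist (fst z) (snd z))"
proof -
  obtain D where D: "\<And>u v. u \<in> \<Omega> \<Longrightarrow> v \<in> \<Omega> \<Longrightarrow> dist u v \<le> D"
    using compact_imp_bounded[OF compact_\<Omega>] unfolding bounded_two_points by blast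
  have pair_meas: "(\<lambda>\<omega>. (X 0 \<omega>, Y 0 \<omega>)) \<in> M \<rightarrow>\<^sub>M borel \<Otimes>\<^sub>M borel" by measurable
  have "integrable M (\<lambda>\<omega>. dist (X 0 \<omega>) (Y 0 \<omega>))"
    using D X_in_\<Omega> Y_in_\<Omega> by (intro integrable_const_bound[where B = D]) auto
  then show ?thesis
    unfolding distr_X_Y[of 0, symmetric] by (subst integrable_distr_eq[OF pair_meas]) auto
qed

lemma expected_dist_X_Y:
  "(\<integral>z. dist (fst z) (snd z) \<partial>(\<mu>P \<Otimes>\<^sub>M \<mu>D))
     = (\<integral>x. \<integral>y. norm (y - x) * \<phi>P x * \<phi>D y \<partial>lborel \<partial>lborel)"
proof -
  interpret pair_prob_space \<mu>P \<mu>D by (rule pair_prob_space_\<mu>P_\<mu>D)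
  have inner_meas: "(\<lambda>x. \<integral>y. \<phi>D y * dist x y \<partial>lborel) \<in> borel_measurable lborel"
    by (rule lborel.borel_measurable_lebesgue_integral)
      (simp add: measurable_cong_sets[OF sets_pair_measure_cong[OF sets_lborel sets_lborel] refl])
  have "(\<integral>z. dist (fst z) (snd z) \<partial>(\<mu>P \<Otimes>\<^sub>M \<mu>D)) = (\<integral>x. \<integral>y. dist x y \<partial>\<mu>D \<partial>\<mu>P)"
    using integral_fst'[OF integrable_dist_X_Y] by simp
  also have "\<dots> = (\<integral>x. \<integral>y. \<phi>D y * dist x y \<partial>lborel \<partial>\<mu>P)"
    unfolding \<mu>D_def using \<phi>D_nonneg
    by (subst integral_density) (auto simp: measurable_cong_sets[OF sets_lborel refl])
  also have "\<dots> = (\<integral>x. \<phi>P x * (\<integral>y. \<phi>D y * dist x y \<partial>lborel) \<partial>lborel)"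
    unfolding \<mu>P_def using \<phi>P_nonneg inner_meas
    by (subst integral_density) (auto simp: measurable_cong_sets[OF sets_lborel refl])
  also have "\<dots> = (\<integral>x. \<integral>y. norm (y - x) * \<phi>P x * \<phi>D y \<partial>lborel \<partial>lborel)"
  proof (intro Bochner_Integration.integral_cong refl)
    fix x
    have "(\<integral>y. norm (y - x) * \<phi>P x * \<phi>D y \<partial>lborel) = (\<integral>y. \<phi>P x * (\<phi>D y * dist x y) \<partial>lborel)"
      by (simp add: dist_norm norm_minus_commute mult_ac)
    then show "\<phi>P x * (\<integral>y. \<phi>D y * dist x y \<partial>lborel) = (\<integral>y. norm (y - x) * \<phi>P x * \<phi>D y \<partial>lborel)"
      by simp
  qed
  finally show ?thesis .
qed

lemma wasserstein_le_discrete_coupling: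
  assumes cells: "fine_cell_partition \<Omega> A m c \<delta>"
    and P: "discrete_coupling m (\<lambda>j. measure \<mu>D (A j)) (\<lambda>k. measure \<mu>P (A k)) P"
  shows "wasserstein \<Omega> \<phi>D \<phi>P \<le> (\<Sum>j<m. \<Sum>k<m. P j k * (dist (c j) (c k) + 2 * \<delta>))"
proof -
  interpret fine_cell_partition \<Omega> A m c \<delta> by (rule cells)
  interpret cell_plan \<Omega> A m \<mu>D \<mu>P P
    by (intro cell_plan.intro cell_partition_axioms cell_plan_axioms.intro pair_prob_space.intro
        pair_sigma_finite.intro prob_space_imp_sigma_finite prob_space_\<mu>D prob_space_\<mu>P
        \<mu>D_null \<mu>P_null P) simp_all
  show ?thesis
    unfolding wasserstein_def \<mu>D_def[symmetric] \<mu>P_def[symmetric]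
    by (rule transport_cost_le_cell_plan) (simp add: dist_le_centers dist_norm[symmetric] dist_commute)
qed

lemma integral_indicator_fst:
  assumes "S \<in> sets borel"
  shows "(\<integral>z. indicator S (fst z) \<partial>(\<mu>P \<Otimes>\<^sub>M \<mu>D)) = measure \<mu>P S"
proof -
  interpret pair_prob_space \<mu>P \<mu>D by (rule pair_prob_space_\<mu>P_\<mu>D)
  have "(\<integral>z. indicator S (fst z) \<partial>(\<mu>P \<Otimes>\<^sub>M \<mu>D)) = (\<integral>z. indicator (S \<times> UNIV) z \<partial>(\<mu>P \<Otimes>\<^sub>M \<mu>D))"
    by (intro Bochner_Integration.integral_cong) (auto simp: indicator_def)
  also have "\<dots> = measure \<mu>P S"
    using assms by (simp add: space_pair_measure measure_def M2.emeasure_pair_measure_Times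
        M2.emeasure_space_1[simplified])
  finally show ?thesis .
qed

lemma integral_indicator_snd:
  assumes "S \<in> sets borel"
  shows "(\<integral>z. indicator S (snd z) \<partial>(\<mu>P \<Otimes>\<^sub>M \<mu>D)) = measure \<mu>D S"
proof -
  interpret pair_prob_space \<mu>P \<mu>D by (rule pair_prob_space_\<mu>P_\<mu>D)
  have "(\<integral>z. indicator S (snd z) \<partial>(\<mu>P \<Otimes>\<^sub>M \<mu>D)) = (\<integral>z. indicator (UNIV \<times> S) z \<partial>(\<mu>P \<Otimes>\<^sub>M \<mu>D))"
    by (intro Bochner_Integration.integral_cong) (auto simp: indicator_def)
  also have "\<dots> = measure \<mu>D S"
    using assms by (simp add: space_pair_measure measure_def M2.emeasure_pair_measure_Times
        M1.emeasure_space_1[simplified])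
  finally show ?thesis .
qed

lemma cell_freq_converges:
  assumes "cell_partition \<Omega> A m"
  shows "AE \<omega> in M. \<forall>j. (\<lambda>n. cell_partition.cell_freq A (\<lambda>i. Y i \<omega>) n j) \<longlonglongrightarrow> measure \<mu>D (A j)"
    and "AE \<omega> in M. \<forall>k. (\<lambda>n. cell_partition.cell_freq A (\<lambda>i. X i \<omega>) n k) \<longlonglongrightarrow> measure \<mu>P (A k)"
proof -
  interpret cell_partition \<Omega> A m by (rule assms)
  have "AE \<omega> in M. (\<lambda>n. (\<Sum>i<n. indicator (A j) (Y i \<omega>)) / n) \<longlonglongrightarrow> measure \<mu>D (A j)" for j
  proof -
    have "(\<lambda>z. indicator (A j) (snd z) :: real) \<in> borel_measurable (borel \<Otimes>\<^sub>M borel)"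
      using cell_borel[of j] by measurable
    moreover have "indicator (A j) (snd (x, y)) \<in> {0..1::real}" if "x \<in> \<Omega>" "y \<in> \<Omega>" for x y
      by (simp add: indicator_def)
    ultimately have "AE \<omega> in M. (\<lambda>n. (\<Sum>i<n. indicator (A j) (Y i \<omega>)) / n)
                  \<longlonglongrightarrow> (\<integral>z. indicator (A j) (snd z) \<partial>(\<mu>P \<Otimes>\<^sub>M \<mu>D))"
      using average_pairs_converges[of "\<lambda>z. indicator (A j) (snd z)" 0 1] zero_less_one
      unfolding snd_conv by blast
    then show ?thesis unfolding integral_indicator_snd[OF cell_borel] .
  qed
  then show "AE \<omega> in M. \<forall>j. (\<lambda>n. cell_freq (\<lambda>i. Y i \<omega>) n j) \<longlonglongrightarrow> measure \<mu>D (A j)"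
    unfolding AE_all_countable cell_freq_def by blast
  have "AE \<omega> in M. (\<lambda>n. (\<Sum>i<n. indicator (A k) (X i \<omega>)) / n) \<longlonglongrightarrow> measure \<mu>P (A k)" for k
  proof -
    have "(\<lambda>z. indicator (A k) (fst z) :: real) \<in> borel_measurable (borel \<Otimes>\<^sub>M borel)"
      using cell_borel[of k] by measurable
    moreover have "indicator (A k) (fst (x, y)) \<in> {0..1::real}" if "x \<in> \<Omega>" "y \<in> \<Omega>" for x y
      by (simp add: indicator_def)
    ultimately have "AE \<omega> in M. (\<lambda>n. (\<Sum>i<n. indicator (A k) (X i \<omega>)) / n)
                  \<longlonglongrightarrow> (\<integral>z. indicator (A k) (fst z) \<partial>(\<mu>P \<Otimes>\<^sub>M \<mu>D))"
      using average_pairs_converges[of "\<lambda>z. indicator (A k) (fst z)" 0 1] zero_less_one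
      unfolding fst_conv by blast
    then show ?thesis unfolding integral_indicator_fst[OF cell_borel] .
  qed
  then show "AE \<omega> in M. \<forall>k. (\<lambda>n. cell_freq (\<lambda>i. X i \<omega>) n k) \<longlonglongrightarrow> measure \<mu>P (A k)"
    unfolding AE_all_countable cell_freq_def by blast
qed

lemma sum_cell_masses:
  assumes "cell_partition \<Omega> A m"
  shows "(\<Sum>j<m. measure \<mu>D (A j)) = 1" "(\<Sum>k<m. measure \<mu>P (A k)) = 1"
proof -
  have "finite_measure \<mu>D" "finite_measure \<mu>P"
    using prob_space_\<mu>D prob_space_\<mu>P unfolding prob_space_def by simp_all
  then show "(\<Sum>j<m. measure \<mu>D (A j)) = 1" "(\<Sum>k<m. measure \<mu>P (A k)) = 1"
    using cell_partition.sum_measure_cells_Int[OF assms _ _ _ sets.top] \<mu>D_null \<mu>P_null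
      prob_space.prob_space[OF prob_space_\<mu>D] prob_space.prob_space[OF prob_space_\<mu>P]
    by simp_all
qed

lemma average_dist_converges:
  "AE \<omega> in M. (\<lambda>n. (\<Sum>i<n. dist (X i \<omega>) (Y i \<omega>)) / n) \<longlonglongrightarrow> (\<integral>z. dist (fst z) (snd z) \<partial>(\<mu>P \<Otimes>\<^sub>M \<mu>D))"
proof -
  obtain D where diam: "\<And>u v. u \<in> \<Omega> \<Longrightarrow> v \<in> \<Omega> \<Longrightarrow> dist u v \<le> D"
    using compact_imp_bounded[OF compact_\<Omega>] unfolding bounded_two_points by blast
  have "(\<lambda>z::'d \<times> 'd. dist (fst z) (snd z)) \<in> borel_measurable (borel \<Otimes>\<^sub>M borel)" by measurable
  moreover have "-1 < \<bar>D\<bar> + 1" by simp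
  moreover have "dist (fst (x, y)) (snd (x, y)) \<in> {-1..\<bar>D\<bar> + 1}" if "x \<in> \<Omega>" "y \<in> \<Omega>" for x y
    using diam[OF that] zero_le_dist[of x y] abs_ge_self[of D] by (simp del: zero_le_dist)
  ultimately show ?thesis
    using average_pairs_converges[of "\<lambda>z. dist (fst z) (snd z)" "-1" "\<bar>D\<bar> + 1"]
    unfolding fst_conv snd_conv by blast
qed

lemma le_liminf_sc_opt_AE:
  assumes "0 < \<delta>"
  shows "AE \<omega> in M. ereal ((\<integral>z. dist (fst z) (snd z) \<partial>(\<mu>P \<Otimes>\<^sub>M \<mu>D)) + wasserstein \<Omega> \<phi>D \<phi>P - 4 * \<delta>)
           \<le> liminf (\<lambda>n. ereal (sc_opt (\<lambda>i. X i \<omega>) (\<lambda>i. Y i \<omega>) n / n))"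
proof -
  obtain A m c where cells: "fine_cell_partition \<Omega> A m c \<delta>"
    using exists_fine_cell_partition[OF compact_\<Omega> assms] .
  interpret fine_cell_partition \<Omega> A m c \<delta> by (rule cells)
  obtain D where diam: "\<And>u v. u \<in> \<Omega> \<Longrightarrow> v \<in> \<Omega> \<Longrightarrow> dist u v \<le> D"
    using compact_imp_bounded[OF compact_\<Omega>] unfolding bounded_two_points by blast
  have sum_cells: "(\<Sum>j<m. measure \<mu>D (A j)) = 1" "(\<Sum>k<m. measure \<mu>P (A k)) = 1"
    using sum_cell_masses[OF cell_partition_axioms] .
  show ?thesis
    using average_dist_converges cell_freq_converges[OF cell_partition_axioms] AE_space
  proof eventually_elim
    case (elim \<omega>)
    show ?case
      using elim X_in_\<Omega> Y_in_\<Omega> sum_cells wasserstein_le_discrete_coupling[OF cells]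
      by (intro le_liminf_sc_opt[OF cells _ _ diam,
            where a = "\<lambda>j. measure \<mu>D (A j)" and b = "\<lambda>k. measure \<mu>P (A k)"]) auto
  qed
qed

end

lemma AE_le_of_approx:
  fixes F :: "'a \<Rightarrow> ereal"
  assumes "\<And>\<delta>. 0 < \<delta> \<Longrightarrow> AE \<omega> in M. ereal (C - \<delta>) \<le> F \<omega>"
  shows "AE \<omega> in M. ereal C \<le> F \<omega>"
proof -
  have "AE \<omega> in M. \<forall>r::nat. ereal (C - inverse (Suc r)) \<le> F \<omega>"
    unfolding AE_all_countable using assms by simp
  then show ?thesis
  proof (rule AE_mp, intro AE_I2 impI)
    fix \<omega> assume "\<forall>r::nat. ereal (C - inverse (Suc r)) \<le> F \<omega>"
    moreover have "(\<lambda>r. ereal (C - inverse (Suc r))) \<longlonglongrightarrow> ereal (C - 0)"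
      by (intro tendsto_intros LIMSEQ_inverse_real_of_nat)
    ultimately show "ereal C \<le> F \<omega>"
      using LIMSEQ_le_const2 by fastforce
  qed
qed

theorem theorem2:
  fixes M :: "'m measure"
    and \<Omega> :: "'d::euclidean_space set"
    and X Y :: "nat \<Rightarrow> 'm \<Rightarrow> 'd"
    and \<phi>P \<phi>D :: "'d \<Rightarrow> real"
  assumes "prob_space M"
    and "DIM('d) \<ge> 2"
    and "compact \<Omega>"
    and "\<And>x. 0 \<le> \<phi>P x" and "\<And>x. 0 \<le> \<phi>D x"
    and "\<And>i. distributed M lborel (X i) (\<lambda>x. ennreal (\<phi>P x))"
    and "\<And>i. distributed M lborel (Y i) (\<lambda>x. ennreal (\<phi>D x))"
    and "\<And>i \<omega>. \<omega> \<in> space M \<Longrightarrow> X i \<omega> \<in> \<Omega>"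
    and "\<And>i \<omega>. \<omega> \<in> space M \<Longrightarrow> Y i \<omega> \<in> \<Omega>"
    and "prob_space.indep_vars M (\<lambda>_. borel)
           (\<lambda>j. case j of Inl i \<Rightarrow> X i | Inr i \<Rightarrow> Y i) UNIV"
  shows "AE \<omega> in M.
           liminf (\<lambda>n. ereal (sc_opt (\<lambda>i. X i \<omega>) (\<lambda>i. Y i \<omega>) n / real n))
             \<ge> ereal ((\<integral>x. \<integral>y. norm (y - x) * \<phi>P x * \<phi>D y \<partial>lborel \<partial>lborel)
                      + wasserstein \<Omega> \<phi>D \<phi>P)"
proof -
  interpret stacker_crane_sample M \<Omega> X Y \<phi>P \<phi>D
    using assms by (simp add: stacker_crane_sample_def stacker_crane_sample_axioms_def)
  have "AE \<omega> in M. ereal ((\<integral>z. dist (fst z) (snd z) \<partial>(\<mu>P \<Otimes>\<^sub>M \<mu>D)) + wasserstein \<Omega> \<phi>D \<phi>P - \<delta>)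
          \<le> liminf (\<lambda>n. ereal (sc_opt (\<lambda>i. X i \<omega>) (\<lambda>i. Y i \<omega>) n / n))" if "0 < \<delta>" for \<delta>
    using le_liminf_sc_opt_AE[of "\<delta> / 4"] that by simp
  from AE_le_of_approx[OF this] show ?thesis unfolding expected_dist_X_Y .
qed

end
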